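(* Let $H$ be a separable Hilbert space, $\mathbb{J}\subseteq\mathbb{Z}$, $\{H_j\}_{j\in\mathbb{J}}$ separable Hilbert spaces and $\Lambda_j\in\mathcal{B}(H,H_j)$ for $j\in\mathbb{J}$, such that $\{\Lambda_j\}_{j\in\mathbb{J}}$ is a g-frame for $H$ with respect to $\{H_j\}_{j\in\mathbb{J}}$. Let $S=\sum_{j\in\mathbb{J}}\Lambda_j^*\Lambda_j$ be its g-frame operator and $\tilde{\Lambda}_j:=\Lambda_jS^{-1}$. For $\mathbb{I}\subseteq\mathbb{J}$ define $S_{\mathbb{I}}f:=\sum_{j\in\mathbb{I}}\Lambda_j^*\tilde{\Lambda}_jf$ for $f\in H$, and let $\mathbb{I}^c=\mathbb{J}\setminus\mathbb{I}$. Then for every $f\in H$, $$\sum_{j\in\mathbb{I}}\langle \tilde{\Lambda}_j f,\Lambda_j f\rangle-\Vert S_{\mathbb{I}}f\Vert^2 =\sum_{j\in\mathbb{I}^c}\overline{\langle \tilde{\Lambda}_j f,\Lambda_j f\rangle}-\Vert S_{\mathbb{I}^c}f\Vert^2.$$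
   Context: A family $\{\Lambda_j\}_{j\in\mathbb{J}}$ with $\Lambda_j\in\mathcal{B}(H,H_j)$ is a g-frame for $H$ with respect to $\{H_j\}$ if there exist $0<A\le B<\infty$ with $A\Vert f\Vert^2\le\sum_{j\in\mathbb{J}}\Vert\Lambda_jf\Vert^2\le B\Vert f\Vert^2$ for all $f\in H$. Its g-frame operator $Sf=\sum_{j}\Lambda_j^*\Lambda_jf$ is bounded, positive and invertible; $\{\tilde{\Lambda}_j\}$ is the canonical dual g-frame. *)

theory Defs
  imports "HOL-Analysis.Analysis"
begin

class complex_inner = real_normed_vector +
  fixes scaleC :: "complex \<Rightarrow> 'a \<Rightarrow> 'a"
    and cinner :: "'a \<Rightarrow> 'a \<Rightarrow> complex"
  assumes scaleC_add_right: "scaleC a (x + y) = scaleC a x + scaleC a y"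
    and scaleC_add_left: "scaleC (a + b) x = scaleC a x + scaleC b x"
    and scaleC_scaleC: "scaleC a (scaleC b x) = scaleC (a * b) x"
    and scaleC_one: "scaleC 1 x = x"
    and scaleR_scaleC: "scaleR r x = scaleC (complex_of_real r) x"
    and cinner_add_left: "cinner (x + y) z = cinner x z + cinner y z"
    and cinner_scaleC_left: "cinner (scaleC a x) y = a * cinner x y"
    and cinner_commute: "cinner y x = cnj (cinner x y)"
    and cinner_self_norm: "cinner x x = complex_of_real ((norm x)\<^sup>2)"

class chilbert_space = complex_inner + complete_space

definition separable_set :: "'a::metric_space set \<Rightarrow> bool" where
  "separable_set S \<longleftrightarrow> (\<exists>D. D \<subseteq> S \<and> countable D \<and> S \<subseteq> closure D)"

definition closed_csubspace :: "'a::complex_inner set \<Rightarrow> bool" where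
  "closed_csubspace S \<longleftrightarrow> closed S \<and> 0 \<in> S \<and>
     (\<forall>x\<in>S. \<forall>y\<in>S. x + y \<in> S) \<and> (\<forall>c. \<forall>x\<in>S. scaleC c x \<in> S)"

definition bounded_clinear_op :: "('a::complex_inner \<Rightarrow> 'b::complex_inner) \<Rightarrow> bool" where
  "bounded_clinear_op T \<longleftrightarrow> bounded_linear T \<and> (\<forall>c x. T (scaleC c x) = scaleC c (T x))"

definition cadjoint :: "('a::complex_inner \<Rightarrow> 'b::complex_inner) \<Rightarrow> 'b \<Rightarrow> 'a" where
  "cadjoint T = (\<lambda>y. THE x. \<forall>v. cinner (T v) y = cinner v x)"

definition g_frame :: "int set \<Rightarrow> (int \<Rightarrow> 'a::complex_inner \<Rightarrow> 'b::complex_inner) \<Rightarrow> bool" where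
  "g_frame J \<Lambda> \<longleftrightarrow> (\<exists>A B. 0 < A \<and> A \<le> B \<and>
     (\<forall>f. (\<lambda>j. (norm (\<Lambda> j f))\<^sup>2) summable_on J \<and>
          A * (norm f)\<^sup>2 \<le> (\<Sum>\<^sub>\<infinity>j\<in>J. (norm (\<Lambda> j f))\<^sup>2) \<and>
          (\<Sum>\<^sub>\<infinity>j\<in>J. (norm (\<Lambda> j f))\<^sup>2) \<le> B * (norm f)\<^sup>2))"

definition g_frame_op :: "int set \<Rightarrow> (int \<Rightarrow> 'a::complex_inner \<Rightarrow> 'b::complex_inner) \<Rightarrow> 'a \<Rightarrow> 'a" where
  "g_frame_op J \<Lambda> f = (\<Sum>\<^sub>\<infinity>j\<in>J. cadjoint (\<Lambda> j) (\<Lambda> j f))"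

definition g_dual :: "int set \<Rightarrow> (int \<Rightarrow> 'a::complex_inner \<Rightarrow> 'b::complex_inner) \<Rightarrow> int \<Rightarrow> 'a \<Rightarrow> 'b" where
  "g_dual J \<Lambda> j = \<Lambda> j \<circ> inv (g_frame_op J \<Lambda>)"

definition g_partial_op :: "int set \<Rightarrow> (int \<Rightarrow> 'a::complex_inner \<Rightarrow> 'b::complex_inner) \<Rightarrow> int set \<Rightarrow> 'a \<Rightarrow> 'a" where
  "g_partial_op J \<Lambda> I f = (\<Sum>\<^sub>\<infinity>j\<in>I. cadjoint (\<Lambda> j) (g_dual J \<Lambda> j f))"

end

theory Submission
  imports Defs
begin

text \<open>
  Put g = S^-1 f. The dual operators then give Lambda~_j f = Lambda_j g, so u = S_I f and
  v = S_I^c f are the two halves of the frame series of S g = f, and u + v = f. Both sides of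
  the identity equal <u, v>: the left side is <u, u + v> - ||u||^2 and the right side is
  <u + v, v> - ||v||^2.

  Adjoints exist by the Riesz
  representation theorem, proved through minimal-norm points of closed convex sets. The series
  sum_j Lambda_j^* Lambda_j g converges unconditionally over every subset of J by a Cauchy
  criterion, since the upper frame bound controls the norm of its finite partial sums. Finally
  S is onto: the lower frame bound makes its range closed, and the minimal-norm point of
  y + range S is orthogonal to its own image under S, hence zero.
\<close>

section \<open>Complex inner product spaces\<close>

lemma cinner_add_right: "cinner x (y + z) = cinner x y + cinner (x::'a::complex_inner) z"
  by (metis cinner_commute cinner_add_left complex_cnj_add)

lemma cinner_scaleC_right: "cinner x (scaleC a y) = cnj a * cinner (x::'a::complex_inner) y"
  by (metis cinner_commute cinner_scaleC_left complex_cnj_mult complex_cnj_cnj)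

lemma cinner_zero_left [simp]: "cinner 0 (y::'a::complex_inner) = 0"
  using cinner_add_left [of 0 0 y] by simp

lemma cinner_zero_right [simp]: "cinner (x::'a::complex_inner) 0 = 0"
  using cinner_add_right [of x 0 0] by simp

lemma cinner_diff_left: "cinner (x - y) z = cinner x z - cinner (y::'a::complex_inner) z"
  using cinner_add_left [of "x - y" y z] by simp

lemma cinner_diff_right: "cinner x (y - z) = cinner x y - cinner (x::'a::complex_inner) z"
  using cinner_add_right [of x "y - z" z] by simp

lemma cinner_self_eq_zero [simp]: "cinner x x = 0 \<longleftrightarrow> x = (0::'a::complex_inner)"
  by (simp add: cinner_self_norm)

lemma cinner_ext:
  assumes "\<And>v. cinner v x = cinner v (y::'a::complex_inner)"
  shows "x = y"
proof -
  have "cinner (x - y) (x - y) = 0"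
    using assms [of "x - y"] by (simp add: cinner_diff_right)
  then show ?thesis by simp
qed

lemma power2_norm_eq_Re_cinner: "(norm x)\<^sup>2 = Re (cinner x (x::'a::complex_inner))"
  by (simp add: cinner_self_norm del: of_real_power)

lemma norm_scaleC: "norm (scaleC a (x::'a::complex_inner)) = cmod a * norm x"
proof -
  have "cinner (scaleC a x) (scaleC a x) = complex_of_real ((cmod a)\<^sup>2) * cinner x x"
    by (simp only: cinner_scaleC_left cinner_scaleC_right complex_norm_square mult.assoc
        mult.left_commute)
  then have "(norm (scaleC a x))\<^sup>2 = (cmod a * norm x)\<^sup>2"
    by (simp add: power2_norm_eq_Re_cinner power_mult_distrib del: of_real_power)
  then show ?thesis
    by (simp add: power2_eq_iff_nonneg)
qed

lemma norm_diff_projection_sq: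
  fixes x y :: "'a::complex_inner"
  assumes "y \<noteq> 0"
  shows "(norm (x - scaleC (cinner x y / complex_of_real ((norm y)\<^sup>2)) y))\<^sup>2
           = (norm x)\<^sup>2 - (cmod (cinner x y))\<^sup>2 / (norm y)\<^sup>2"
proof -
  define a n where "a = cinner x y" and "n = complex_of_real ((norm y)\<^sup>2)"
  have "n \<noteq> 0" using assms by (simp add: n_def)
  have yx: "cinner y x = cnj a" and yy: "cinner y y = n" and n_real: "cnj n = n"
    by (simp_all add: a_def n_def cinner_self_norm flip: cinner_commute)
  have "complex_of_real ((norm (x - scaleC (a / n) y))\<^sup>2)
          = cinner x x - cnj (a / n) * a - a / n * cnj a + a / n * cnj (a / n) * n"
    by (simp add: cinner_diff_left cinner_diff_right cinner_scaleC_left cinner_scaleC_right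
        yx yy a_def [symmetric] algebra_simps del: of_real_power flip: cinner_self_norm)
  also have "\<dots> = cinner x x - a * cnj a / n"
    using \<open>n \<noteq> 0\<close> n_real by (simp add: field_simps)
  also have "\<dots> = complex_of_real ((norm x)\<^sup>2 - (cmod a)\<^sup>2 / (norm y)\<^sup>2)"
    by (simp add: n_def cinner_self_norm complex_norm_square del: of_real_power)
  finally show ?thesis
    unfolding a_def n_def by (simp only: of_real_eq_iff)
qed

lemma cauchy_schwarz_cinner: "cmod (cinner x y) \<le> norm x * norm (y::'a::complex_inner)"
proof (cases "y = 0")
  case False
  have "(cmod (cinner x y))\<^sup>2 / (norm y)\<^sup>2 \<le> (norm x)\<^sup>2"
    using norm_diff_projection_sq [OF False, of x] by (metis diff_ge_0_iff_ge zero_le_power2)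
  then have "(cmod (cinner x y))\<^sup>2 \<le> (norm x * norm y)\<^sup>2"
    using False by (simp add: field_simps power_mult_distrib)
  then show ?thesis
    by (simp add: power2_le_iff_abs_le)
qed simp

lemma bounded_linear_cinner_left: "bounded_linear (\<lambda>x::'a::complex_inner. cinner x y)"
proof (rule bounded_linear_intro [where K = "norm y"])
  show "cinner (r *\<^sub>R x) y = r *\<^sub>R cinner x y" for r x
    by (simp add: scaleR_scaleC cinner_scaleC_left scaleR_conv_of_real)
qed (simp_all add: cinner_add_left cauchy_schwarz_cinner)

lemma bounded_linear_cinner_right: "bounded_linear (\<lambda>y::'a::complex_inner. cinner x y)"
proof (rule bounded_linear_intro [where K = "norm x"])
  show "cinner x (r *\<^sub>R y) = r *\<^sub>R cinner x y" for r y
    by (simp add: scaleR_scaleC cinner_scaleC_right scaleR_conv_of_real)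
  show "norm (cinner x y) \<le> norm y * norm x" for y
    using cauchy_schwarz_cinner [of x y] by (simp add: mult.commute)
qed (simp add: cinner_add_right)

lemma bounded_linear_scaleC: "bounded_linear (scaleC c :: 'a::complex_inner \<Rightarrow> 'a)"
proof (rule bounded_linear_intro [where K = "cmod c"])
  show "scaleC c (r *\<^sub>R x) = r *\<^sub>R scaleC c x" for r x
    by (simp add: scaleR_scaleC scaleC_scaleC mult.commute)
qed (simp_all add: scaleC_add_right norm_scaleC mult.commute)

lemma parallelogram_law:
  "(norm (x - y))\<^sup>2 = 2 * (norm x)\<^sup>2 + 2 * (norm y)\<^sup>2 - (norm (x + (y::'a::complex_inner)))\<^sup>2"
  by (simp add: power2_norm_eq_Re_cinner cinner_diff_left cinner_diff_right
      cinner_add_left cinner_add_right)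

lemma cinner_minus_norm_sq_eq:
  fixes u v :: "'a::complex_inner"
  assumes "u + v = f"
  shows "cinner u f - complex_of_real ((norm u)\<^sup>2) = cinner f v - complex_of_real ((norm v)\<^sup>2)"
  unfolding assms [symmetric] cinner_self_norm [symmetric]
  by (simp add: cinner_add_left cinner_add_right)

section \<open>Minimal norm, Riesz representation and adjoints\<close>

lemma convex_norm_diff_sq_le:
  fixes C :: "'a::complex_inner set"
  assumes "convex C" "x \<in> C" "y \<in> C" "\<And>w. w \<in> C \<Longrightarrow> d \<le> norm w" "0 \<le> d"
  shows "(norm (x - y))\<^sup>2 \<le> 2 * (norm x)\<^sup>2 + 2 * (norm y)\<^sup>2 - 4 * d\<^sup>2"
proof -
  have "(1/2) *\<^sub>R x + (1/2) *\<^sub>R y \<in> C"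
    using assms(1-3) by (rule convexD) auto
  then have "2 * d \<le> norm (x + y)"
    using assms(4) by (fastforce simp flip: scaleR_add_right)
  then have "4 * d\<^sup>2 \<le> (norm (x + y))\<^sup>2"
    using power_mono [of "2 * d" _ 2] assms(5) by (simp add: power_mult_distrib)
  then show ?thesis
    by (simp add: parallelogram_law)
qed

lemma almost_min_norm_sequence_Cauchy:
  fixes C :: "'a::complex_inner set"
  assumes "convex C" "\<And>n. v n \<in> C" "\<And>w. w \<in> C \<Longrightarrow> d \<le> norm w" "0 \<le> d"
    and v_small: "\<And>n. (norm (v n))\<^sup>2 < d\<^sup>2 + inverse (real (Suc n))"
  shows "Cauchy v"
proof (rule CauchyI)
  fix \<epsilon> :: real
  assume "0 < \<epsilon>"
  then obtain N where N: "inverse (real (Suc N)) < \<epsilon>\<^sup>2 / 4"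
    using reals_Archimedean [of "\<epsilon>\<^sup>2 / 4"] by auto
  have "norm (v m - v n) < \<epsilon>" if "N \<le> m" "N \<le> n" for m n
  proof -
    have "inverse (real (Suc m)) \<le> inverse (real (Suc N))"
      "inverse (real (Suc n)) \<le> inverse (real (Suc N))"
      using that by (simp_all add: le_imp_inverse_le)
    then have "(norm (v m - v n))\<^sup>2 < \<epsilon>\<^sup>2"
      using convex_norm_diff_sq_le [OF assms(1,2,2,3,4), of m n] v_small [of m] v_small [of n] N
      by linarith
    then show ?thesis
      using \<open>0 < \<epsilon>\<close> by (simp add: power_less_imp_less_base)
  qed
  then show "\<exists>M. \<forall>m\<ge>M. \<forall>n\<ge>M. norm (v m - v n) < \<epsilon>"
    by blast
qed

theorem closed_convex_has_min_norm:
  fixes C :: "'a::chilbert_space set"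
  assumes "closed C" "convex C" "C \<noteq> {}"
  shows "\<exists>z\<in>C. \<forall>w\<in>C. norm z \<le> norm w"
proof -
  define d where "d = Inf (norm ` C)"
  have d_le: "d \<le> norm w" if "w \<in> C" for w
    unfolding d_def using that by (intro cInf_lower bdd_belowI [where m = 0]) auto
  have "0 \<le> d"
    unfolding d_def using assms(3) by (intro cInf_greatest) auto
  have "\<exists>v. v \<in> C \<and> (norm v)\<^sup>2 < d\<^sup>2 + inverse (real (Suc n))" for n
  proof -
    have "Inf (norm ` C) < sqrt (d\<^sup>2 + inverse (real (Suc n)))"
      using \<open>0 \<le> d\<close> by (simp add: d_def [symmetric] real_less_rsqrt)
    then obtain v where "v \<in> C" "norm v < sqrt (d\<^sup>2 + inverse (real (Suc n)))"
      using cInf_lessD [of "norm ` C"] assms(3) by blast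
    then show ?thesis
      using real_sqrt_less_iff [of "(norm v)\<^sup>2"] by auto
  qed
  then obtain v where v: "\<And>n. v n \<in> C"
    and v_small: "\<And>n. (norm (v n))\<^sup>2 < d\<^sup>2 + inverse (real (Suc n))"
    by metis
  obtain z where z: "v \<longlonglongrightarrow> z"
    using almost_min_norm_sequence_Cauchy [OF assms(2) v d_le \<open>0 \<le> d\<close> v_small]
    by (auto simp: Cauchy_convergent_iff convergent_def)
  have "z \<in> C"
    using closed_sequentially [OF assms(1)] v z by blast
  moreover have "(norm z)\<^sup>2 \<le> d\<^sup>2"
  proof (rule tendsto_le [OF trivial_limit_sequentially])
    show "(\<lambda>n. (norm (v n))\<^sup>2) \<longlonglongrightarrow> (norm z)\<^sup>2"
      using z by (intro tendsto_intros)
    show "(\<lambda>n. d\<^sup>2 + inverse (real (Suc n))) \<longlonglongrightarrow> d\<^sup>2"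
      using tendsto_add [OF tendsto_const LIMSEQ_inverse_real_of_nat] by simp
    show "\<forall>\<^sub>F n in sequentially. (norm (v n))\<^sup>2 \<le> d\<^sup>2 + inverse (real (Suc n))"
      using v_small by (simp add: less_imp_le)
  qed
  then have "norm z \<le> d"
    using \<open>0 \<le> d\<close> by (simp add: power2_le_iff_abs_le)
  ultimately show ?thesis
    using d_le by force
qed

lemma min_norm_imp_orthogonal:
  fixes z n :: "'a::complex_inner"
  assumes "\<And>t. norm z \<le> norm (z - scaleC t n)"
  shows "cinner z n = 0"
proof (cases "n = 0")
  case False
  have "(norm z)\<^sup>2 \<le> (norm (z - scaleC (cinner z n / complex_of_real ((norm n)\<^sup>2)) n))\<^sup>2"
    using assms by (simp add: power_mono)
  then have "(cmod (cinner z n))\<^sup>2 / (norm n)\<^sup>2 \<le> 0"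
    unfolding norm_diff_projection_sq [OF False] by simp
  then show ?thesis
    using False by (simp add: divide_le_0_iff)
qed simp

theorem riesz_representation:
  fixes \<phi> :: "'a::chilbert_space \<Rightarrow> complex"
  assumes "bounded_linear \<phi>" and \<phi>_scaleC: "\<And>c x. \<phi> (scaleC c x) = c * \<phi> x"
  shows "\<exists>y. \<forall>v. \<phi> v = cinner v y"
proof (cases "\<forall>v. \<phi> v = 0")
  case False
  then obtain u where "\<phi> u \<noteq> 0"
    by blast
  interpret bounded_linear \<phi> by fact
  define C where "C = \<phi> -` {1}"
  have "scaleC (1 / \<phi> u) u \<in> C"
    using \<open>\<phi> u \<noteq> 0\<close> by (simp add: C_def \<phi>_scaleC)
  moreover have "closed C"
    unfolding C_def by (intro closed_vimage closed_singleton continuous_on continuous_on_id)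
  moreover have "convex C"
    unfolding C_def by (intro convex_linear_vimage convex_singleton linear_axioms)
  ultimately have "\<exists>z\<in>C. \<forall>w\<in>C. norm z \<le> norm w"
    by (intro closed_convex_has_min_norm) auto
  then obtain z where "z \<in> C" and z_min: "\<And>w. w \<in> C \<Longrightarrow> norm z \<le> norm w"
    by blast
  then have "\<phi> z = 1"
    by (simp add: C_def)
  have kernel_orthogonal: "cinner z n = 0" if "\<phi> n = 0" for n
  proof (rule min_norm_imp_orthogonal)
    show "norm z \<le> norm (z - scaleC t n)" for t
      using that \<open>\<phi> z = 1\<close> by (intro z_min) (simp add: C_def diff \<phi>_scaleC)
  qed
  define r where "r = complex_of_real ((norm z)\<^sup>2)"
  have "r \<noteq> 0"
    using \<open>\<phi> z = 1\<close> zero by (auto simp: r_def)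
  show ?thesis
  proof (intro exI allI)
    fix v
    have "cinner z (v - scaleC (\<phi> v) z) = 0"
      by (rule kernel_orthogonal) (simp add: diff \<phi>_scaleC \<open>\<phi> z = 1\<close>)
    then have "cinner z v = cnj (\<phi> v) * r"
      by (simp add: r_def cinner_diff_right cinner_scaleC_right cinner_self_norm del: of_real_power)
    then have "cinner v z = \<phi> v * r"
      by (subst cinner_commute) (simp add: r_def)
    then show "\<phi> v = cinner v (scaleC (1 / r) z)"
      using \<open>r \<noteq> 0\<close> by (simp add: cinner_scaleC_right r_def)
  qed
qed (intro exI [of _ 0], simp)

lemma cinner_cadjoint:
  fixes T :: "'a::chilbert_space \<Rightarrow> 'b::complex_inner"
  assumes "bounded_clinear_op T"
  shows "cinner (T v) y = cinner v (cadjoint T y)"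
proof -
  have "bounded_linear T" and T_scaleC: "\<And>c x. T (scaleC c x) = scaleC c (T x)"
    using assms by (auto simp: bounded_clinear_op_def)
  then have "\<exists>x. \<forall>v. cinner (T v) y = cinner v x"
    by (intro riesz_representation bounded_linear_compose [OF bounded_linear_cinner_left])
      (simp_all add: T_scaleC cinner_scaleC_left)
  then obtain x where x: "\<And>v. cinner (T v) y = cinner v x"
    by blast
  have "cadjoint T y = x"
    unfolding cadjoint_def
  proof (rule the_equality)
    show "\<forall>v. cinner (T v) y = cinner v x"
      using x by blast
    show "x' = x" if "\<forall>v. cinner (T v) y = cinner v x'" for x'
      using that by (rule_tac cinner_ext) (simp add: x)
  qed
  then show ?thesis
    by (simp add: x)
qed

lemma cinner_cadjoint_left:
  fixes T :: "'a::chilbert_space \<Rightarrow> 'b::complex_inner"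
  assumes "bounded_clinear_op T"
  shows "cinner (cadjoint T y) v = cinner y (T v)"
proof -
  have "cinner (cadjoint T y) v = cnj (cinner (T v) y)"
    by (simp add: cinner_cadjoint [OF assms] flip: cinner_commute)
  then show ?thesis
    by (simp flip: cinner_commute)
qed

lemma cadjoint_add:
  fixes T :: "'a::chilbert_space \<Rightarrow> 'b::complex_inner"
  assumes "bounded_clinear_op T"
  shows "cadjoint T (x + y) = cadjoint T x + cadjoint T y"
  by (rule cinner_ext) (simp add: cinner_cadjoint [OF assms, symmetric] cinner_add_right)

lemma cadjoint_scaleC:
  fixes T :: "'a::chilbert_space \<Rightarrow> 'b::complex_inner"
  assumes "bounded_clinear_op T"
  shows "cadjoint T (scaleC c x) = scaleC c (cadjoint T x)"
  by (rule cinner_ext) (simp add: cinner_cadjoint [OF assms, symmetric] cinner_scaleC_right)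

section \<open>Unconditional summability\<close>

lemma summable_on_small_tailsI:
  fixes f :: "'i \<Rightarrow> 'a::{real_normed_vector,complete_space}"
  assumes "\<And>\<epsilon>. 0 < \<epsilon> \<Longrightarrow>
    \<exists>F\<^sub>0. finite F\<^sub>0 \<and> F\<^sub>0 \<subseteq> K \<and> (\<forall>F. finite F \<and> F \<subseteq> K - F\<^sub>0 \<longrightarrow> norm (sum f F) < \<epsilon>)"
  shows "f summable_on K"
proof -
  have "\<exists>P. eventually P (finite_subsets_at_top K) \<and>
          (\<forall>F F'. P F \<and> P F' \<longrightarrow> dist (sum f F) (sum f F') < \<epsilon>)" if "0 < \<epsilon>" for \<epsilon>
  proof -
    obtain F\<^sub>0 where F\<^sub>0: "finite F\<^sub>0" "F\<^sub>0 \<subseteq> K"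
      and tail: "\<And>F. finite F \<Longrightarrow> F \<subseteq> K - F\<^sub>0 \<Longrightarrow> norm (sum f F) < \<epsilon> / 2"
      using assms [of "\<epsilon> / 2"] \<open>0 < \<epsilon>\<close> by auto
    define P where "P F \<longleftrightarrow> finite F \<and> F\<^sub>0 \<subseteq> F \<and> F \<subseteq> K" for F
    have "eventually P (finite_subsets_at_top K)"
      unfolding P_def eventually_finite_subsets_at_top using F\<^sub>0 by blast
    moreover have "dist (sum f F) (sum f F') < \<epsilon>" if "P F" "P F'" for F F'
    proof -
      have "sum f F - sum f F' = sum f (F - F\<^sub>0) - sum f (F' - F\<^sub>0)"
        using that by (simp add: P_def sum.subset_diff [of F\<^sub>0])
      then have "dist (sum f F) (sum f F') \<le> norm (sum f (F - F\<^sub>0)) + norm (sum f (F' - F\<^sub>0))"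
        by (simp add: dist_norm norm_triangle_ineq4)
      also have "\<dots> < \<epsilon> / 2 + \<epsilon> / 2"
        using that by (intro add_strict_mono tail) (auto simp: P_def)
      finally show ?thesis
        by simp
    qed
    ultimately show ?thesis
      by blast
  qed
  then have "cauchy_filter (filtermap (sum f) (finite_subsets_at_top K))"
    by (simp add: cauchy_filter_metric_filtermap)
  then obtain S where "(sum f \<longlongrightarrow> S) (finite_subsets_at_top K)"
    using complete_uniform [where S = UNIV] complete_UNIV by (force simp: filterlim_def)
  then show ?thesis
    unfolding summable_on_def has_sum_def by blast
qed

lemma nonneg_summable_on_small_tails:
  fixes g :: "'i \<Rightarrow> real"
  assumes "g summable_on K" "\<And>x. x \<in> K \<Longrightarrow> 0 \<le> g x" "0 < \<epsilon>"
  shows "\<exists>F\<^sub>0. finite F\<^sub>0 \<and> F\<^sub>0 \<subseteq> K \<and> (\<forall>F. finite F \<and> F \<subseteq> K - F\<^sub>0 \<longrightarrow> sum g F < \<epsilon>)"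
proof -
  obtain F\<^sub>0 where F\<^sub>0: "finite F\<^sub>0" "F\<^sub>0 \<subseteq> K" and "dist (sum g F\<^sub>0) (infsum g K) \<le> \<epsilon> / 2"
    using infsum_finite_approximation [OF assms(1), of "\<epsilon> / 2"] assms(3) by auto
  then have close: "infsum g K \<le> sum g F\<^sub>0 + \<epsilon> / 2"
    unfolding dist_real_def by linarith
  have "sum g F < \<epsilon>" if "finite F" "F \<subseteq> K - F\<^sub>0" for F
  proof -
    have "sum g F + sum g F\<^sub>0 = sum g (F \<union> F\<^sub>0)"
      using that F\<^sub>0 by (intro sum.union_disjoint [symmetric]) auto
    also have "\<dots> \<le> infsum g K"
      using that F\<^sub>0 assms(1,2) by (intro finite_sum_le_infsum) auto
    finally show ?thesis
      using close assms(3) by linarith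
  qed
  with F\<^sub>0 show ?thesis
    by blast
qed

lemma summable_on_norm_sum_sq_le:
  fixes f :: "'i \<Rightarrow> 'a::{real_normed_vector,complete_space}" and g :: "'i \<Rightarrow> real"
  assumes "g summable_on K" "\<And>x. x \<in> K \<Longrightarrow> 0 \<le> g x" "0 \<le> c"
    and bound: "\<And>F. finite F \<Longrightarrow> F \<subseteq> K \<Longrightarrow> (norm (sum f F))\<^sup>2 \<le> c * sum g F"
  shows "f summable_on K"
proof (rule summable_on_small_tailsI)
  fix \<epsilon> :: real
  assume "0 < \<epsilon>"
  then obtain F\<^sub>0 where F\<^sub>0: "finite F\<^sub>0" "F\<^sub>0 \<subseteq> K"
    and tail: "\<And>F. finite F \<Longrightarrow> F \<subseteq> K - F\<^sub>0 \<Longrightarrow> sum g F < \<epsilon>\<^sup>2 / (c + 1)"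
    using nonneg_summable_on_small_tails [OF assms(1,2), of "\<epsilon>\<^sup>2 / (c + 1)"] assms(3) by auto
  have "norm (sum f F) < \<epsilon>" if "finite F" "F \<subseteq> K - F\<^sub>0" for F
  proof -
    have "(norm (sum f F))\<^sup>2 \<le> c * sum g F"
      using that by (intro bound) auto
    also have "\<dots> \<le> c * (\<epsilon>\<^sup>2 / (c + 1))"
      using tail [OF that] assms(3) by (intro mult_left_mono) auto
    also have "\<dots> < \<epsilon>\<^sup>2"
      using \<open>0 < \<epsilon>\<close> assms(3) by (simp add: field_simps)
    finally show ?thesis
      using \<open>0 < \<epsilon>\<close> by (simp add: power_less_imp_less_base)
  qed
  with F\<^sub>0 show "\<exists>F\<^sub>0. finite F\<^sub>0 \<and> F\<^sub>0 \<subseteq> K \<and> (\<forall>F. finite F \<and> F \<subseteq> K - F\<^sub>0 \<longrightarrow> norm (sum f F) < \<epsilon>)"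
    by blast
qed

lemma norm_has_sum_le:
  assumes "(f has_sum S) A" "\<And>F. finite F \<Longrightarrow> F \<subseteq> A \<Longrightarrow> norm (sum f F) \<le> b"
  shows "norm S \<le> b"
proof (rule tendsto_upperbound [OF _ _ finite_subsets_at_top_neq_bot])
  show "((\<lambda>F. norm (sum f F)) \<longlongrightarrow> norm S) (finite_subsets_at_top A)"
    using assms(1) unfolding has_sum_def by (rule tendsto_norm)
  show "\<forall>\<^sub>F F in finite_subsets_at_top A. norm (sum f F) \<le> b"
    using assms(2) by (rule eventually_finite_subsets_at_top_weakI)
qed

lemma cinner_sum_left: "cinner (\<Sum>j\<in>F. x j) y = (\<Sum>j\<in>F. cinner (x j) (y::'a::complex_inner))"
  by (induction F rule: infinite_finite_induct) (simp_all add: cinner_add_left)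

section \<open>g-Bessel sequences and g-frames\<close>

locale g_bessel =
  fixes J :: "int set" and L :: "int \<Rightarrow> 'a::chilbert_space \<Rightarrow> 'b::complex_inner" and B :: real
  assumes bounded_clinear: "\<And>j. j \<in> J \<Longrightarrow> bounded_clinear_op (L j)"
    and B_nonneg: "0 \<le> B"
    and summable: "\<And>f. (\<lambda>j. (norm (L j f))\<^sup>2) summable_on J"
    and upper: "\<And>f. (\<Sum>\<^sub>\<infinity>j\<in>J. (norm (L j f))\<^sup>2) \<le> B * (norm f)\<^sup>2"
begin

lemma g_bessel_subset: "K \<subseteq> J \<Longrightarrow> g_bessel K L B"
proof unfold_locales
  assume "K \<subseteq> J"
  then show summable_K: "(\<lambda>j. (norm (L j f))\<^sup>2) summable_on K" for f
    using summable summable_on_subset_banach by blast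
  show "(\<Sum>\<^sub>\<infinity>j\<in>K. (norm (L j f))\<^sup>2) \<le> B * (norm f)\<^sup>2" for f
    by (rule order_trans [OF infsum_mono2 [OF summable_K summable \<open>K \<subseteq> J\<close>] upper]) simp
qed (use bounded_clinear B_nonneg in auto)

lemma L_add: "j \<in> J \<Longrightarrow> L j (x + y) = L j x + L j y"
  using bounded_clinear by (auto simp: bounded_clinear_op_def linear_add bounded_linear.linear)

lemma L_scaleC: "j \<in> J \<Longrightarrow> L j (scaleC c x) = scaleC c (L j x)"
  using bounded_clinear by (simp add: bounded_clinear_op_def)

lemma finite_sum_le: "finite F \<Longrightarrow> F \<subseteq> J \<Longrightarrow> (\<Sum>j\<in>F. (norm (L j f))\<^sup>2) \<le> B * (norm f)\<^sup>2"
  using finite_sum_le_infsum [OF summable, of F f] upper [of f] by simp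

text \<open>Apply the Bessel bound to the partial sum h itself:
  ||h||^2 = sum_j <Lambda_j f, Lambda_j h> <= (sum_j ||Lambda_j f||^2)^(1/2) (B ||h||^2)^(1/2).\<close>
lemma norm_sum_sq_le:
  assumes "finite F" "F \<subseteq> J"
  shows "(norm (\<Sum>j\<in>F. cadjoint (L j) (L j f)))\<^sup>2 \<le> B * (\<Sum>j\<in>F. (norm (L j f))\<^sup>2)"
proof -
  define h where "h = (\<Sum>j\<in>F. cadjoint (L j) (L j f))"
  define a where "a = (\<Sum>j\<in>F. (norm (L j f))\<^sup>2)"
  have "cinner h h = (\<Sum>j\<in>F. cinner (cadjoint (L j) (L j f)) h)"
    by (simp only: h_def cinner_sum_left)
  also have "\<dots> = (\<Sum>j\<in>F. cinner (L j f) (L j h))"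
    using assms(2) by (intro sum.cong refl cinner_cadjoint_left bounded_clinear) auto
  finally have "complex_of_real ((norm h)\<^sup>2) = (\<Sum>j\<in>F. cinner (L j f) (L j h))"
    by (simp only: cinner_self_norm)
  then have "(norm h)\<^sup>2 = cmod (\<Sum>j\<in>F. cinner (L j f) (L j h))"
    by (metis abs_power2 abs_norm_cancel norm_of_real)
  also have "\<dots> \<le> (\<Sum>j\<in>F. norm (L j f) * norm (L j h))"
    by (intro order_trans [OF norm_sum] sum_mono cauchy_schwarz_cinner)
  finally have "((norm h)\<^sup>2)\<^sup>2 \<le> (\<Sum>j\<in>F. norm (L j f) * norm (L j h))\<^sup>2"
    by (intro power_mono) auto
  also have "\<dots> \<le> a * (\<Sum>j\<in>F. (norm (L j h))\<^sup>2)"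
    unfolding a_def by (rule Cauchy_Schwarz_ineq_sum)
  also have "\<dots> \<le> a * (B * (norm h)\<^sup>2)"
    unfolding a_def using finite_sum_le [OF assms] by (intro mult_left_mono sum_nonneg) auto
  finally have h_sq: "(norm h)\<^sup>2 * (norm h)\<^sup>2 \<le> (B * a) * (norm h)\<^sup>2"
    by (simp add: power2_eq_square algebra_simps)
  have "(norm h)\<^sup>2 \<le> B * a" if "h \<noteq> 0"
    using mult_right_le_imp_le [OF h_sq] that by simp
  moreover have "0 \<le> B * a"
    unfolding a_def using B_nonneg by (simp add: sum_nonneg)
  ultimately have "(norm h)\<^sup>2 \<le> B * a"
    by (cases "h = 0") auto
  then show ?thesis
    by (simp add: h_def a_def)
qed

lemma has_sum_g_frame_op: "((\<lambda>j. cadjoint (L j) (L j f)) has_sum g_frame_op J L f) J"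
proof -
  have "(\<lambda>j. cadjoint (L j) (L j f)) summable_on J"
    by (rule summable_on_norm_sum_sq_le [OF summable _ B_nonneg norm_sum_sq_le [of _ f]]) simp_all
  then show ?thesis
    unfolding g_frame_op_def by (rule has_sum_infsum)
qed

lemma norm_g_frame_op_le: "norm (g_frame_op J L f) \<le> B * norm f"
proof (rule norm_has_sum_le [OF has_sum_g_frame_op])
  fix F
  assume F: "finite F" "F \<subseteq> J"
  have "(norm (\<Sum>j\<in>F. cadjoint (L j) (L j f)))\<^sup>2 \<le> B * (B * (norm f)\<^sup>2)"
    using norm_sum_sq_le [OF F, of f] mult_left_mono [OF finite_sum_le [OF F] B_nonneg]
    by (rule order_trans)
  also have "\<dots> = (B * norm f)\<^sup>2"
    by (simp add: power2_eq_square)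
  finally show "norm (\<Sum>j\<in>F. cadjoint (L j) (L j f)) \<le> B * norm f"
    by (rule power2_le_imp_le) (simp add: B_nonneg)
qed

lemma g_frame_op_add: "g_frame_op J L (x + y) = g_frame_op J L x + g_frame_op J L y"
proof -
  have "((\<lambda>j. cadjoint (L j) (L j x) + cadjoint (L j) (L j y))
          has_sum g_frame_op J L x + g_frame_op J L y) J"
    by (intro has_sum_add has_sum_g_frame_op)
  also have "?this \<longleftrightarrow> ((\<lambda>j. cadjoint (L j) (L j (x + y))) has_sum g_frame_op J L x + g_frame_op J L y) J"
    by (intro has_sum_cong) (simp add: L_add cadjoint_add bounded_clinear)
  finally show ?thesis
    using has_sum_unique [OF has_sum_g_frame_op] by blast
qed

lemma g_frame_op_scaleC: "g_frame_op J L (scaleC c x) = scaleC c (g_frame_op J L x)"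
proof -
  have "((\<lambda>j. scaleC c (cadjoint (L j) (L j x))) has_sum scaleC c (g_frame_op J L x)) J"
    by (intro has_sum_bounded_linear [OF bounded_linear_scaleC] has_sum_g_frame_op)
  also have "?this \<longleftrightarrow> ((\<lambda>j. cadjoint (L j) (L j (scaleC c x))) has_sum scaleC c (g_frame_op J L x)) J"
    by (intro has_sum_cong) (simp add: L_scaleC cadjoint_scaleC bounded_clinear)
  finally show ?thesis
    using has_sum_unique [OF has_sum_g_frame_op] by blast
qed

lemma bounded_linear_g_frame_op: "bounded_linear (g_frame_op J L)"
proof (rule bounded_linear_intro [where K = B])
  show "g_frame_op J L (r *\<^sub>R x) = r *\<^sub>R g_frame_op J L x" for r x
    by (simp add: scaleR_scaleC g_frame_op_scaleC)
qed (simp_all add: g_frame_op_add norm_g_frame_op_le mult.commute)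

lemma has_sum_cinner_g_frame_op_left:
  "((\<lambda>j. cinner (L j f) (L j h)) has_sum cinner (g_frame_op J L f) h) J"
proof -
  have "((\<lambda>j. cinner (cadjoint (L j) (L j f)) h) has_sum cinner (g_frame_op J L f) h) J"
    by (rule has_sum_bounded_linear [OF bounded_linear_cinner_left has_sum_g_frame_op])
  then show ?thesis
    by (rule has_sum_cong [THEN iffD1, rotated]) (simp add: cinner_cadjoint_left bounded_clinear)
qed

lemma has_sum_cinner_g_frame_op_right:
  "((\<lambda>j. cinner (L j h) (L j f)) has_sum cinner h (g_frame_op J L f)) J"
proof -
  have "((\<lambda>j. cinner h (cadjoint (L j) (L j f))) has_sum cinner h (g_frame_op J L f)) J"
    by (rule has_sum_bounded_linear [OF bounded_linear_cinner_right has_sum_g_frame_op])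
  then show ?thesis
    by (rule has_sum_cong [THEN iffD1, rotated]) (simp add: cinner_cadjoint bounded_clinear)
qed

lemma cinner_g_frame_op_self:
  "cinner (g_frame_op J L f) f = complex_of_real (\<Sum>\<^sub>\<infinity>j\<in>J. (norm (L j f))\<^sup>2)"
proof (rule has_sum_unique [OF has_sum_cinner_g_frame_op_left])
  show "((\<lambda>j. cinner (L j f) (L j f)) has_sum complex_of_real (\<Sum>\<^sub>\<infinity>j\<in>J. (norm (L j f))\<^sup>2)) J"
    unfolding cinner_self_norm by (intro has_sum_of_real has_sum_infsum summable)
qed

lemma g_frame_op_split:
  assumes "K \<subseteq> J"
  shows "g_frame_op K L f + g_frame_op (J - K) L f = g_frame_op J L f"
proof -
  interpret K: g_bessel K L B
    using assms by (rule g_bessel_subset)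
  interpret K_compl: g_bessel "J - K" L B
    by (rule g_bessel_subset) blast
  show ?thesis
    using has_sum_Un_disjoint [OF K.has_sum_g_frame_op K_compl.has_sum_g_frame_op] assms
    by (intro has_sum_unique [OF _ has_sum_g_frame_op]) (auto simp: Un_absorb1)
qed

end

locale g_frame_bounds = g_bessel J L B for J L B +
  fixes A :: real
  assumes A_pos: "0 < A"
    and lower: "\<And>f. A * (norm f)\<^sup>2 \<le> (\<Sum>\<^sub>\<infinity>j\<in>J. (norm (L j f))\<^sup>2)"
begin

lemma norm_g_frame_op_ge: "A * norm f \<le> norm (g_frame_op J L f)"
proof -
  have "A * (norm f)\<^sup>2 \<le> cmod (cinner (g_frame_op J L f) f)"
    using lower [of f] by (simp add: cinner_g_frame_op_self infsum_nonneg)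
  also have "\<dots> \<le> norm (g_frame_op J L f) * norm f"
    by (rule cauchy_schwarz_cinner)
  finally have "(A * norm f) * norm f \<le> norm (g_frame_op J L f) * norm f"
    by (simp add: power2_eq_square mult.assoc)
  then show ?thesis
    by (cases "f = 0") (auto dest: mult_right_le_imp_le)
qed

lemma closed_range_g_frame_op: "closed (range (g_frame_op J L))"
proof (rule complete_imp_closed)
  show "complete (range (g_frame_op J L))"
    using norm_g_frame_op_ge
    by (intro complete_isometric_image [OF A_pos subspace_UNIV bounded_linear_g_frame_op])
      (auto simp: complete_UNIV)
qed

lemma surj_g_frame_op: "surj (g_frame_op J L)"
proof -
  let ?S = "g_frame_op J L"
  interpret S: bounded_linear ?S
    by (rule bounded_linear_g_frame_op)
  have "y \<in> range ?S" for y
  proof -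
    define C where "C = (+) y ` range ?S"
    have "closed C"
      unfolding C_def by (intro closed_translation closed_range_g_frame_op)
    moreover have "convex C"
      unfolding C_def
      by (intro convex_translation convex_linear_image convex_UNIV
          bounded_linear.linear bounded_linear_g_frame_op)
    moreover have "C \<noteq> {}"
      by (simp add: C_def)
    ultimately have "\<exists>z\<in>C. \<forall>w\<in>C. norm z \<le> norm w"
      by (rule closed_convex_has_min_norm)
    then obtain x where z_min: "\<And>w. w \<in> C \<Longrightarrow> norm (y + ?S x) \<le> norm w"
      by (auto simp: C_def)
    define z where "z = y + ?S x"
    have "cinner z (?S z) = 0"
    proof (rule min_norm_imp_orthogonal)
      fix t
      have "z - scaleC t (?S z) = y + ?S (x - scaleC t z)"
        by (simp add: z_def S.diff g_frame_op_scaleC)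
      then show "norm z \<le> norm (z - scaleC t (?S z))"
        unfolding z_def by (intro z_min) (simp add: C_def)
    qed
    then have "(\<Sum>\<^sub>\<infinity>j\<in>J. (norm (L j z))\<^sup>2) = 0"
      using cinner_g_frame_op_self [of z] by (metis cinner_commute complex_cnj_zero of_real_eq_0_iff)
    then have "z = 0"
      using lower [of z] A_pos by (simp add: mult_le_0_iff)
    then have "y = ?S (- x)"
      by (simp add: z_def S.neg eq_neg_iff_add_eq_0)
    then show ?thesis
      by blast
  qed
  then show ?thesis
    by blast
qed

end

lemma g_frame_imp_g_frame_bounds:
  assumes "g_frame J L" "\<And>j. j \<in> J \<Longrightarrow> bounded_clinear_op (L j)"
  obtains A B where "g_frame_bounds J L B A"
proof -
  obtain A B where "0 < A" "A \<le> B" and bounds: "\<forall>f. (\<lambda>j. (norm (L j f))\<^sup>2) summable_on J \<and>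
      A * (norm f)\<^sup>2 \<le> (\<Sum>\<^sub>\<infinity>j\<in>J. (norm (L j f))\<^sup>2) \<and> (\<Sum>\<^sub>\<infinity>j\<in>J. (norm (L j f))\<^sup>2) \<le> B * (norm f)\<^sup>2"
    using assms(1) unfolding g_frame_def by blast
  then have "g_frame_bounds J L B A"
    using assms(2) by unfold_locales auto
  then show thesis
    by (rule that)
qed

lemma g_partial_op_eq_g_frame_op:
  "g_partial_op J L K f = g_frame_op K L (inv (g_frame_op J L) f)"
  by (simp add: g_partial_op_def g_frame_op_def g_dual_def)

theorem theorem3p1:
  fixes J I :: "int set"
    and Hs :: "int \<Rightarrow> 'b::chilbert_space set"
    and \<Lambda> :: "int \<Rightarrow> 'a::chilbert_space \<Rightarrow> 'b"
    and f :: 'a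
  assumes "separable_set (UNIV :: 'a set)"
    and "\<forall>j\<in>J. closed_csubspace (Hs j) \<and> separable_set (Hs j)"
    and "\<forall>j\<in>J. bounded_clinear_op (\<Lambda> j) \<and> range (\<Lambda> j) \<subseteq> Hs j"
    and "g_frame J \<Lambda>"
    and "I \<subseteq> J"
  shows "(\<Sum>\<^sub>\<infinity>j\<in>I. cinner (g_dual J \<Lambda> j f) (\<Lambda> j f))
           - complex_of_real ((norm (g_partial_op J \<Lambda> I f))\<^sup>2)
         = (\<Sum>\<^sub>\<infinity>j\<in>J - I. cnj (cinner (g_dual J \<Lambda> j f) (\<Lambda> j f)))
           - complex_of_real ((norm (g_partial_op J \<Lambda> (J - I) f))\<^sup>2)"
proof -
  obtain A B where "g_frame_bounds J \<Lambda> B A"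
    using assms(4) by (rule g_frame_imp_g_frame_bounds) (use assms(3) in blast)
  then interpret g_frame_bounds J \<Lambda> B A .
  interpret I: g_bessel I \<Lambda> B
    using \<open>I \<subseteq> J\<close> by (rule g_bessel_subset)
  interpret I_compl: g_bessel "J - I" \<Lambda> B
    by (rule g_bessel_subset) blast
  define g where "g = inv (g_frame_op J \<Lambda>) f"
  have dual: "g_dual J \<Lambda> j f = \<Lambda> j g" for j
    by (simp add: g_dual_def g_def)
  have split: "g_frame_op I \<Lambda> g + g_frame_op (J - I) \<Lambda> g = f"
    using g_frame_op_split [OF \<open>I \<subseteq> J\<close>, of g] surj_f_inv_f [OF surj_g_frame_op] by (simp add: g_def)
  have "(\<Sum>\<^sub>\<infinity>j\<in>I. cinner (g_dual J \<Lambda> j f) (\<Lambda> j f)) = cinner (g_frame_op I \<Lambda> g) f"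
    unfolding dual by (rule infsumI [OF I.has_sum_cinner_g_frame_op_left])
  moreover have "(\<Sum>\<^sub>\<infinity>j\<in>J - I. cnj (cinner (g_dual J \<Lambda> j f) (\<Lambda> j f)))
      = cinner f (g_frame_op (J - I) \<Lambda> g)"
    using I_compl.has_sum_cinner_g_frame_op_right [of f g]
    by (simp add: dual infsumI flip: cinner_commute)
  ultimately show ?thesis
    unfolding g_partial_op_eq_g_frame_op g_def [symmetric]
    using cinner_minus_norm_sq_eq [OF split] by simp
qed

end
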